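(* Let $\beta\in V_A\setminus\{\emptyset\}$ and $\nu\in\beta V_A$ with $\mathfrak c(\nu_{|\nu|})\ge2$. Choose a bijection $\iota_\nu:\{1,\dots,\mathfrak c(\nu_{|\nu|})\}\to\mathfrak C(\nu_{|\nu|})$ and set $q_m=\sum_{k=1}^mP_{\nu_{|\nu|},\iota_\nu(k)}$. For $j\in\{1,\dots,\mathfrak c(\nu_{|\nu|})-1\}$ define $a^{(\nu,j)}\in\mathbb R^{\mathfrak c(\nu_{|\nu|})}$ by $$a^{(\nu,j)}_k=\begin{cases}\Bigl(\frac{P_{\nu_{|\nu|},\iota_\nu(j+1)}}{\mu_c(C(\nu))q_jq_{j+1}}\Bigr)^{1/2},&1\le k\le j,\\ -\Bigl(\frac{q_j}{\mu_c(C(\nu))q_{j+1}P_{\nu_{|\nu|},\iota_\nu(j+1)}}\Bigr)^{1/2},&k=j+1,\\ 0,&k\ge j+2,\end{cases}$$ and $h_{\nu,j}=\sum_{k=1}^{\mathfrak c(\nu_{|\nu|})}a^{(\nu,j)}_k\chi_{C(\nu\iota_\nu(k))}$. Then: (1) $h_{\nu,j}$ is supported on $C(\nu)$ and constant on each $C(\nu i)$, $i\in\mathfrak C(\nu_{|\nu|})$; (2) $\int_{\Omega_A}h_{\nu,j}\,d\mu_c=0$; (3) $\langle h_{\nu,j},h_{\nu,j'}\rangle_{L^2(\Omega_A,\mu_c)}=\delta_{j,j'}$; (4) $\{\mu_c(C(\nu))^{-1/2}\chi_{C(\nu)}\}\cup\{h_{\nu,j}:1\le j\le\mathfrak c(\nu_{|\nu|})-1\}$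 is an orthonormal basis of the space of functions on $C(\nu)$ that are constant on each $C(\nu i)$.
   Context: $A\in M_N(\{0,1\})$ is primitive; $V_A$ is the set of admissible finite words (words $x_1\cdots x_k$ over $\{1,\dots,N\}$ with $A_{x_n,x_{n+1}}=1$), $\emptyset$ the empty word, $\beta V_A$ the admissible words starting with $\beta$. $\Omega_A$ is the space of infinite admissible sequences, $C(\alpha)$ the cylinder of sequences starting with $\alpha$, $\chi_S$ a characteristic function. $\lambda_A$ is the Perron–Frobenius eigenvalue, $u>0$ with $Au=\lambda_Au$, $\sum u_i=1$; $P_{i,j}=A_{i,j}u_j/(\lambda_Au_i)$. $\mathfrak C(i)=\{j:A_{i,j}=1\}$, $\mathfrak c(i)=\#\mathfrak C(i)$. $\mu_c$ is the Borel probability measure on $\Omega_A$ with $\mu_c(C(\alpha_1\cdots\alpha_n))=u_{\alpha_n}\lambda_A^{-(n-1)}$. *)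

theory Defs
  imports "HOL-Analysis.Analysis"
begin

text \<open>Alphabet is {1..N}; the 0/1 matrix A is given entrywise as a real-valued function.\<close>

fun mpow :: "nat \<Rightarrow> (nat \<Rightarrow> nat \<Rightarrow> real) \<Rightarrow> nat \<Rightarrow> nat \<Rightarrow> nat \<Rightarrow> real" where
  "mpow N A 0 i j = (if i = j then 1 else 0)"
| "mpow N A (Suc k) i j = (\<Sum>l\<in>{1..N}. mpow N A k i l * A l j)"

definition zero_one_matrix :: "nat \<Rightarrow> (nat \<Rightarrow> nat \<Rightarrow> real) \<Rightarrow> bool" where
  "zero_one_matrix N A \<longleftrightarrow> (\<forall>i\<in>{1..N}. \<forall>j\<in>{1..N}. A i j = 0 \<or> A i j = 1)"

definition primitive :: "nat \<Rightarrow> (nat \<Rightarrow> nat \<Rightarrow> real) \<Rightarrow> bool" where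
  "primitive N A \<longleftrightarrow> (\<exists>k\<ge>1. \<forall>i\<in>{1..N}. \<forall>j\<in>{1..N}. mpow N A k i j > 0)"

definition admissible_words :: "nat \<Rightarrow> (nat \<Rightarrow> nat \<Rightarrow> real) \<Rightarrow> nat list set" where
  "admissible_words N A = {w. set w \<subseteq> {1..N} \<and>
      (\<forall>n. Suc n < length w \<longrightarrow> A (w ! n) (w ! Suc n) = 1)}"

definition words_from :: "nat \<Rightarrow> (nat \<Rightarrow> nat \<Rightarrow> real) \<Rightarrow> nat list \<Rightarrow> nat list set" where
  "words_from N A \<beta> = {w \<in> admissible_words N A. (\<exists>w'. w = \<beta> @ w')}"

text \<open>Omega_A: infinite admissible sequences (indexed from 0).\<close>
definition Omega :: "nat \<Rightarrow> (nat \<Rightarrow> nat \<Rightarrow> real) \<Rightarrow> (nat \<Rightarrow> nat) set" where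
  "Omega N A = {x. \<forall>n. x n \<in> {1..N} \<and> A (x n) (x (Suc n)) = 1}"

definition cyl :: "nat \<Rightarrow> (nat \<Rightarrow> nat \<Rightarrow> real) \<Rightarrow> nat list \<Rightarrow> (nat \<Rightarrow> nat) set" where
  "cyl N A \<alpha> = {x \<in> Omega N A. \<forall>i < length \<alpha>. x i = \<alpha> ! i}"

definition succs :: "nat \<Rightarrow> (nat \<Rightarrow> nat \<Rightarrow> real) \<Rightarrow> nat \<Rightarrow> nat set" where
  "succs N A i = {j \<in> {1..N}. A i j = 1}"

definition nsuccs :: "nat \<Rightarrow> (nat \<Rightarrow> nat \<Rightarrow> real) \<Rightarrow> nat \<Rightarrow> nat" where
  "nsuccs N A i = card (succs N A i)"

definition Pmat :: "(nat \<Rightarrow> nat \<Rightarrow> real) \<Rightarrow> real \<Rightarrow> (nat \<Rightarrow> real) \<Rightarrow> nat \<Rightarrow> nat \<Rightarrow> real" where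
  "Pmat A lam u i j = A i j * u j / (lam * u i)"

definition is_mu_c :: "nat \<Rightarrow> (nat \<Rightarrow> nat \<Rightarrow> real) \<Rightarrow> real \<Rightarrow> (nat \<Rightarrow> real) \<Rightarrow> (nat \<Rightarrow> nat) measure \<Rightarrow> bool" where
  "is_mu_c N A lam u M \<longleftrightarrow>
     space M = Omega N A \<and>
     sets M = sigma_sets (Omega N A) (cyl N A ` admissible_words N A) \<and>
     (\<forall>\<alpha> \<in> admissible_words N A. \<alpha> \<noteq> [] \<longrightarrow>
        emeasure M (cyl N A \<alpha>) = ennreal (u (last \<alpha>) / lam ^ (length \<alpha> - 1)))"

end

theory Submission
  imports Defs
begin

text \<open>Let \<open>c\<close> be the number of successors of the last letter of \<open>\<nu>\<close> and
  \<open>p k = P(last \<nu>, \<iota> k)\<close>. Since \<open>\<mu>\<^sub>c(C(\<nu> \<iota>(k))) = \<mu>\<^sub>c(C(\<nu>)) p k\<close>, the functions on \<open>C(\<nu>)\<close> that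
  are constant on every \<open>C(\<nu> i)\<close> are the step functions \<open>\<Sum>k. b k \<chi>\<^bsub>C(\<nu> \<iota>(k))\<^esub>\<close>, and their
  \<open>L\<^sup>2(\<mu>\<^sub>c)\<close> inner products are the weighted inner products \<open>\<mu>\<^sub>c(C(\<nu>)) \<Sum>k. b k b' k p k\<close> of the
  coefficient vectors in \<open>\<real>\<^sup>c\<close>. In this weighted space the vector \<open>a\<^sub>j\<close> equals some
  \<open>\<alpha> \<ge> 0\<close> on the first \<open>j\<close> coordinates and \<open>-\<beta> < 0\<close> at coordinate \<open>j + 1\<close>,
  where \<open>\<alpha> q j = \<beta> p (j+1)\<close> and \<open>\<alpha>\<^sup>2 q j + \<beta>\<^sup>2 p (j+1) = 1 / \<mu>\<^sub>c(C(\<nu>))\<close>. The first identity makes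
  \<open>a\<^sub>j\<close> orthogonal to every vector that is constant on \<open>{1..j+1}\<close>, in particular to the
  constant vector and to all \<open>a\<^sub>j\<^sub>'\<close> with \<open>j' > j\<close>; the second one normalises it.\<close>

section \<open>Haar vectors for a weighted inner product on \<open>\<real>\<^sup>c\<close>\<close>

text \<open>With \<open>\<mu> = \<mu>\<^sub>c(C(\<nu>))\<close> and \<open>p k = P(last \<nu>, \<iota> k)\<close>, \<open>cumsum p\<close> is the \<open>q\<close> of the statement,
  \<open>haar_vector \<mu> p j\<close> is \<open>a\<^sub>j\<close>, and \<open>haar_basis \<mu> p 0\<close> is the coefficient vector of
  \<open>\<mu>\<^sub>c(C(\<nu>))\<^sup>-\<^sup>1\<^sup>/\<^sup>2 \<chi>\<^bsub>C(\<nu>)\<^esub>\<close>.\<close>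

definition cumsum :: "(nat \<Rightarrow> real) \<Rightarrow> nat \<Rightarrow> real" where
  "cumsum p m = (\<Sum>k=1..m. p k)"

definition haar_pos :: "real \<Rightarrow> (nat \<Rightarrow> real) \<Rightarrow> nat \<Rightarrow> real" where
  "haar_pos \<mu> p j = sqrt (p (j+1) / (\<mu> * cumsum p j * cumsum p (j+1)))"

definition haar_neg :: "real \<Rightarrow> (nat \<Rightarrow> real) \<Rightarrow> nat \<Rightarrow> real" where
  "haar_neg \<mu> p j = sqrt (cumsum p j / (\<mu> * cumsum p (j+1) * p (j+1)))"

definition haar_vector :: "real \<Rightarrow> (nat \<Rightarrow> real) \<Rightarrow> nat \<Rightarrow> nat \<Rightarrow> real" where
  "haar_vector \<mu> p j k =
     (if 1 \<le> k \<and> k \<le> j then haar_pos \<mu> p j else if k = j + 1 then - haar_neg \<mu> p j else 0)"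

definition haar_basis :: "real \<Rightarrow> (nat \<Rightarrow> real) \<Rightarrow> nat \<Rightarrow> nat \<Rightarrow> real" where
  "haar_basis \<mu> p j = (if j = 0 then (\<lambda>_. 1 / sqrt \<mu>) else haar_vector \<mu> p j)"

lemma cumsum_Suc: "cumsum p (Suc m) = cumsum p m + p (Suc m)"
  by (simp add: cumsum_def)

lemma cumsum_pos:
  assumes "1 \<le> m" and "m \<le> c" and "\<forall>k\<in>{1..c}. 0 < p k"
  shows "0 < cumsum p m"
  unfolding cumsum_def using assms by (intro sum_pos) auto

lemma haar_neg_pos:
  assumes "0 < \<mu>" and "0 < cumsum p j" and "0 < p (j+1)"
  shows "0 < haar_neg \<mu> p j"
  using assms by (simp add: haar_neg_def cumsum_Suc)

lemma haar_balance:
  assumes "0 < \<mu>" and Q: "0 < cumsum p j" and P: "0 < p (j+1)"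
  shows "haar_pos \<mu> p j * cumsum p j = haar_neg \<mu> p j * p (j+1)"
proof -
  define r where "r = p (j+1) * cumsum p j / (\<mu> * cumsum p (j+1))"
  have "haar_pos \<mu> p j * cumsum p j = sqrt (p (j+1) / (\<mu> * cumsum p j * cumsum p (j+1)) * (cumsum p j)\<^sup>2)"
    unfolding haar_pos_def real_sqrt_mult using Q by simp
  also have "\<dots> = sqrt r"
    using Q unfolding r_def by (simp add: power2_eq_square)
  also have "\<dots> = sqrt (cumsum p j / (\<mu> * cumsum p (j+1) * p (j+1)) * (p (j+1))\<^sup>2)"
    using P unfolding r_def by (simp add: power2_eq_square)
  also have "\<dots> = haar_neg \<mu> p j * p (j+1)"
    unfolding haar_neg_def real_sqrt_mult using P by simp
  finally show ?thesis .
qed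

lemma haar_energy:
  assumes "0 < \<mu>" and Q: "0 < cumsum p j" and P: "0 < p (j+1)"
  shows "(haar_pos \<mu> p j)\<^sup>2 * cumsum p j + (haar_neg \<mu> p j)\<^sup>2 * p (j+1) = 1 / \<mu>"
proof -
  have Q': "cumsum p (j+1) = cumsum p j + p (j+1)" and "0 < cumsum p (j+1)"
    using Q P by (simp_all add: cumsum_Suc)
  then have "(haar_pos \<mu> p j)\<^sup>2 * cumsum p j + (haar_neg \<mu> p j)\<^sup>2 * p (j+1)
      = (p (j+1) + cumsum p j) / (\<mu> * cumsum p (j+1))"
    using assms by (simp add: haar_pos_def haar_neg_def add_divide_distrib)
  also have "\<dots> = 1 / \<mu>"
    using Q' \<open>0 < cumsum p (j+1)\<close> by (simp add: add.commute)
  finally show ?thesis .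
qed

lemma sum_haar_vector:
  assumes "j + 1 \<le> c"
  shows "(\<Sum>k=1..c. haar_vector \<mu> p j k * g k)
    = haar_pos \<mu> p j * cumsum g j - haar_neg \<mu> p j * g (j+1)"
proof -
  have "(\<Sum>k=1..c. haar_vector \<mu> p j k * g k) = (\<Sum>k=1..Suc j. haar_vector \<mu> p j k * g k)"
    using assms by (intro sum.mono_neutral_right) (auto simp: haar_vector_def)
  also have "\<dots> = (\<Sum>k=1..j. haar_pos \<mu> p j * g k) - haar_neg \<mu> p j * g (j+1)"
    by (simp add: haar_vector_def)
  finally show ?thesis
    by (simp add: cumsum_def sum_distrib_left)
qed

lemma cumsum_haar_vector:
  assumes "i \<le> j"
  shows "cumsum (\<lambda>k. haar_vector \<mu> p j k * g k) i = haar_pos \<mu> p j * cumsum g i"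
  unfolding cumsum_def sum_distrib_left using assms
  by (intro sum.cong) (auto simp: haar_vector_def)

lemma haar_vector_mean_zero:
  assumes "0 < \<mu>" and p: "\<forall>k\<in>{1..c}. 0 < p k" and j: "j \<in> {1..c-1}"
  shows "(\<Sum>k=1..c. haar_vector \<mu> p j k * p k) = 0"
proof -
  have "0 < cumsum p j" "0 < p (j+1)" "j + 1 \<le> c"
    using cumsum_pos[of j c p] p j by auto
  then show ?thesis
    using sum_haar_vector[of j c \<mu> p p] haar_balance[OF \<open>0 < \<mu>\<close>] j by simp
qed

lemma haar_vector_orthonormal:
  assumes "0 < \<mu>" and p: "\<forall>k\<in>{1..c}. 0 < p k" and "j \<in> {1..c-1}" and "j' \<in> {1..c-1}"
  shows "\<mu> * (\<Sum>k=1..c. haar_vector \<mu> p j k * haar_vector \<mu> p j' k * p k)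
    = (if j = j' then 1 else 0)"
proof -
  have inner: "(\<Sum>k=1..c. haar_vector \<mu> p j k * haar_vector \<mu> p j' k * p k)
      = haar_pos \<mu> p j * haar_pos \<mu> p j' * cumsum p j - haar_neg \<mu> p j * haar_vector \<mu> p j' (j+1) * p (j+1)"
    if "j \<in> {1..c-1}" "j' \<in> {1..c-1}" "j \<le> j'" for j j'
    using that sum_haar_vector[of j c \<mu> p "\<lambda>k. haar_vector \<mu> p j' k * p k"]
      cumsum_haar_vector[of j j' \<mu> p p] by (simp add: mult.assoc)
  have pos: "0 < cumsum p j" "0 < p (j+1)" if "j \<in> {1..c-1}" for j
    using that p cumsum_pos[of j c p] by auto
  have off_diagonal: "\<mu> * (\<Sum>k=1..c. haar_vector \<mu> p j k * haar_vector \<mu> p j' k * p k) = 0"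
    if "j \<in> {1..c-1}" "j' \<in> {1..c-1}" "j < j'" for j j'
  proof -
    have "haar_vector \<mu> p j' (j+1) = haar_pos \<mu> p j'"
      using that by (simp add: haar_vector_def)
    then have "(\<Sum>k=1..c. haar_vector \<mu> p j k * haar_vector \<mu> p j' k * p k)
        = haar_pos \<mu> p j' * (haar_pos \<mu> p j * cumsum p j - haar_neg \<mu> p j * p (j+1))"
      using inner[OF that(1,2)] that by (simp add: algebra_simps)
    then show ?thesis
      using haar_balance[OF \<open>0 < \<mu>\<close> pos[OF that(1)]] by simp
  qed
  have diagonal: "\<mu> * (\<Sum>k=1..c. haar_vector \<mu> p j k * haar_vector \<mu> p j k * p k) = 1"
    using inner[of j j] haar_energy[OF \<open>0 < \<mu>\<close> pos[OF \<open>j \<in> _\<close>]] \<open>0 < \<mu>\<close> \<open>j \<in> _\<close>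
    by (simp add: haar_vector_def power2_eq_square)
  show ?thesis
  proof (cases j j' rule: linorder_cases)
    case greater
    then show ?thesis
      using off_diagonal[of j' j] assms(3,4) by (simp add: mult.commute mult.left_commute)
  qed (use off_diagonal diagonal assms(3,4) in auto)
qed

lemma haar_basis_orthonormal:
  assumes "0 < \<mu>" and p: "\<forall>k\<in>{1..c}. 0 < p k" and total: "cumsum p c = 1"
    and "j \<in> {0..c-1}" and "j' \<in> {0..c-1}"
  shows "\<mu> * (\<Sum>k=1..c. haar_basis \<mu> p j k * haar_basis \<mu> p j' k * p k)
    = (if j = j' then 1 else 0)"
proof -
  have mean: "(\<Sum>k=1..c. haar_vector \<mu> p i k * p k / sqrt \<mu>) = 0" if "i \<in> {1..c-1}" for i
    using haar_vector_mean_zero[OF \<open>0 < \<mu>\<close> p that] by (simp add: sum_divide_distrib[symmetric])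
  consider "j = 0" "j' = 0" | "j = 0" "j' \<noteq> 0" | "j \<noteq> 0" "j' = 0" | "j \<noteq> 0" "j' \<noteq> 0"
    by blast
  then show ?thesis
  proof cases
    case 1
    then show ?thesis
      using total \<open>0 < \<mu>\<close> by (simp add: haar_basis_def cumsum_def sum_divide_distrib[symmetric])
  next
    case 2
    then show ?thesis
      using mean[of j'] assms(5) by (simp add: haar_basis_def mult.commute)
  next
    case 3
    then show ?thesis
      using mean[of j] assms(4) by (simp add: haar_basis_def)
  next
    case 4
    then show ?thesis
      using haar_vector_orthonormal[OF \<open>0 < \<mu>\<close> p, of j j'] assms(4,5) by (simp add: haar_basis_def)
  qed
qed

text \<open>Spanning is proved by adjoining the vectors one at a time: the \<open>n\<close>-th Haar vector is
  constant on \<open>{1..n}\<close>, so only the new coordinate \<open>n + 1\<close> has to be fitted.\<close>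

lemma haar_vector_span:
  assumes "0 < \<mu>" and p: "\<forall>k\<in>{1..c}. 0 < p k" and "n + 1 \<le> c"
  shows "\<exists>d0 d. \<forall>k\<in>{1..n+1}. w k = d0 + (\<Sum>j=1..n. d j * haar_vector \<mu> p j k)"
  using \<open>n + 1 \<le> c\<close>
proof (induction n)
  case 0
  show ?case by auto
next
  case (Suc m)
  then obtain d0 d where d: "\<forall>k\<in>{1..m+1}. w k = d0 + (\<Sum>j=1..m. d j * haar_vector \<mu> p j k)"
    by auto
  let ?a = "haar_pos \<mu> p (Suc m)" and ?b = "haar_neg \<mu> p (Suc m)"
  have pos: "0 < cumsum p (Suc m)" "0 < p (Suc m + 1)"
    using Suc.prems p cumsum_pos[of "Suc m" c p] by auto
  then have "0 \<le> ?a" "0 < ?b"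
    using \<open>0 < \<mu>\<close> haar_neg_pos by (auto simp: haar_pos_def cumsum_Suc)
  define dm where "dm = (d0 - w (m+2)) / (?a + ?b)"
  have "dm * (?a + ?b) = d0 - w (m+2)"
    using \<open>0 \<le> ?a\<close> \<open>0 < ?b\<close> unfolding dm_def by simp
  then have dm: "d0 - dm * ?a - dm * ?b = w (m+2)"
    by (simp add: distrib_left)
  have old: "(\<Sum>j=1..m. (d(Suc m := dm)) j * haar_vector \<mu> p j k) = (\<Sum>j=1..m. d j * haar_vector \<mu> p j k)"
    for k by (intro sum.cong) auto
  have "\<forall>k\<in>{1..Suc m+1}.
      w k = (d0 - dm * ?a) + (\<Sum>j=1..Suc m. (d(Suc m := dm)) j * haar_vector \<mu> p j k)"
  proof
    fix k assume k: "k \<in> {1..Suc m+1}"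
    show "w k = (d0 - dm * ?a) + (\<Sum>j=1..Suc m. (d(Suc m := dm)) j * haar_vector \<mu> p j k)"
    proof (cases "k \<le> Suc m")
      case True
      then show ?thesis
        using d k old by (simp add: haar_vector_def)
    next
      case False
      then have "k = m + 2" using k by simp
      moreover have "(\<Sum>j=1..m. d j * haar_vector \<mu> p j (m+2)) = 0"
        by (intro sum.neutral) (simp add: haar_vector_def)
      ultimately show ?thesis
        using old dm by (simp add: haar_vector_def)
    qed
  qed
  then show ?case by blast
qed

lemma haar_basis_span:
  assumes "0 < \<mu>" and "\<forall>k\<in>{1..c}. 0 < p k" and "1 \<le> c"
  shows "\<exists>d. \<forall>k\<in>{1..c}. w k = (\<Sum>j=0..c-1. d j * haar_basis \<mu> p j k)"
proof -
  obtain d0 d where d: "\<forall>k\<in>{1..c}. w k = d0 + (\<Sum>j=1..c-1. d j * haar_vector \<mu> p j k)"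
    using haar_vector_span[OF assms(1,2), of "c - 1" w] \<open>1 \<le> c\<close> by auto
  have "w k = (\<Sum>j=0..c-1. (d(0 := d0 * sqrt \<mu>)) j * haar_basis \<mu> p j k)" if "k \<in> {1..c}" for k
    using d that \<open>0 < \<mu>\<close> by (simp add: sum.atLeast_Suc_atMost haar_basis_def)
  then show ?thesis by blast
qed

section \<open>Step functions on a finite family of sets\<close>

definition step_fun :: "('i \<Rightarrow> 'a set) \<Rightarrow> 'i set \<Rightarrow> ('i \<Rightarrow> real) \<Rightarrow> 'a \<Rightarrow> real" where
  "step_fun C I b x = (\<Sum>k\<in>I. b k * indicator (C k) x)"

lemma step_fun_cong: "(\<And>k. k \<in> I \<Longrightarrow> b k = b' k) \<Longrightarrow> step_fun C I b = step_fun C I b'"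
  unfolding step_fun_def by (intro ext sum.cong) auto

lemma step_fun_eq_coeff:
  assumes "finite I" and "disjoint_family_on C I" and "k \<in> I" and "x \<in> C k"
  shows "step_fun C I b x = b k"
proof -
  have "step_fun C I b x = (\<Sum>k'\<in>I. if k' = k then b k' else 0)"
    unfolding step_fun_def
    using assms(2-4) by (intro sum.cong) (auto simp: disjoint_family_on_def indicator_def)
  then show ?thesis
    using assms(1,3) by simp
qed

lemma step_fun_eq_0:
  assumes "x \<notin> (\<Union>k\<in>I. C k)"
  shows "step_fun C I b x = 0"
  using assms unfolding step_fun_def by (intro sum.neutral) auto

lemma step_fun_const:
  assumes "finite I" and "disjoint_family_on C I"
  shows "step_fun C I (\<lambda>_. r) x = r * indicator (\<Union>k\<in>I. C k) x"
  using step_fun_eq_coeff[OF assms] step_fun_eq_0 by (cases "x \<in> (\<Union>k\<in>I. C k)") auto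

lemma step_fun_mult:
  assumes "finite I" and "disjoint_family_on C I"
  shows "step_fun C I b x * step_fun C I b' x = step_fun C I (\<lambda>k. b k * b' k) x"
  using step_fun_eq_coeff[OF assms] step_fun_eq_0[of x C I] by (cases "x \<in> (\<Union>k\<in>I. C k)") auto

lemma step_fun_linear:
  "step_fun C I (\<lambda>k. \<Sum>j\<in>J. d j * B j k) x = (\<Sum>j\<in>J. d j * step_fun C I (B j) x)"
  unfolding step_fun_def sum_distrib_left sum_distrib_right
  by (subst sum.swap) (simp add: mult.assoc)

lemma integral_step_fun:
  assumes "finite I" and "\<And>k. k \<in> I \<Longrightarrow> C k \<in> sets M" and "\<And>k. k \<in> I \<Longrightarrow> emeasure M (C k) < \<infinity>"
  shows "(\<integral>x. step_fun C I b x \<partial>M) = (\<Sum>k\<in>I. b k * measure M (C k))"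
proof -
  have "(\<integral>x. step_fun C I b x \<partial>M) = (\<Sum>k\<in>I. \<integral>x. b k * indicator (C k) x \<partial>M)"
    unfolding step_fun_def using assms by (intro Bochner_Integration.integral_sum) auto
  also have "\<dots> = (\<Sum>k\<in>I. b k * measure M (C k))"
    using assms(2) by (intro sum.cong) (auto simp: sets.Int_space_eq2)
  finally show ?thesis .
qed

section \<open>Cylinders and the measure \<open>\<mu>\<^sub>c\<close>\<close>

lemma last_in_alphabet:
  "w \<in> admissible_words N A \<Longrightarrow> w \<noteq> [] \<Longrightarrow> last w \<in> {1..N}"
  using last_in_set[of w] unfolding admissible_words_def by blast

lemma admissible_snoc:
  assumes "w \<in> admissible_words N A" and "w \<noteq> []" and "i \<in> succs N A (last w)"
  shows "w @ [i] \<in> admissible_words N A"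
  unfolding admissible_words_def
proof (intro CollectI conjI allI impI)
  show "set (w @ [i]) \<subseteq> {1..N}"
    using assms unfolding admissible_words_def succs_def by auto
next
  fix n assume n: "Suc n < length (w @ [i])"
  show "A ((w @ [i]) ! n) ((w @ [i]) ! Suc n) = 1"
  proof (cases "Suc n < length w")
    case True
    then show ?thesis using assms(1) unfolding admissible_words_def by (auto simp: nth_append)
  next
    case False
    then have "n = length w - 1" using n by simp
    then show ?thesis
      using assms(2,3) unfolding succs_def by (auto simp: nth_append last_conv_nth)
  qed
qed

lemma cyl_snoc_subset: "cyl N A (w @ [i]) \<subseteq> cyl N A w"
  unfolding cyl_def by (auto simp: nth_append)

lemma cyl_snoc_disjoint: "i \<noteq> i' \<Longrightarrow> cyl N A (w @ [i]) \<inter> cyl N A (w @ [i']) = {}"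
  unfolding cyl_def by (auto dest!: spec[of _ "length w"])

lemma cyl_eq_UN_snoc:
  assumes "w \<noteq> []"
  shows "cyl N A w = (\<Union>i\<in>succs N A (last w). cyl N A (w @ [i]))"
proof
  show "(\<Union>i\<in>succs N A (last w). cyl N A (w @ [i])) \<subseteq> cyl N A w"
    using cyl_snoc_subset by blast
next
  show "cyl N A w \<subseteq> (\<Union>i\<in>succs N A (last w). cyl N A (w @ [i]))"
  proof
    fix x assume x: "x \<in> cyl N A w"
    then have "x \<in> Omega N A" and prefix: "\<forall>n<length w. x n = w ! n"
      unfolding cyl_def by auto
    have "x (length w - 1) = last w"
      using prefix assms by (simp add: last_conv_nth)
    moreover have "x (length w) \<in> {1..N}" "A (x (length w - 1)) (x (Suc (length w - 1))) = 1"
      using \<open>x \<in> Omega N A\<close> unfolding Omega_def by auto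
    ultimately have "x (length w) \<in> succs N A (last w)"
      using assms unfolding succs_def by simp
    moreover have "x \<in> cyl N A (w @ [x (length w)])"
      using \<open>x \<in> Omega N A\<close> prefix unfolding cyl_def by (auto simp: nth_append less_Suc_eq)
    ultimately show "x \<in> (\<Union>i\<in>succs N A (last w). cyl N A (w @ [i]))"
      by blast
  qed
qed

lemma disjoint_family_on_cyl_snoc:
  "inj_on \<iota> I \<Longrightarrow> disjoint_family_on (\<lambda>k. cyl N A (w @ [\<iota> k])) I"
  unfolding disjoint_family_on_def by (metis cyl_snoc_disjoint inj_onD)

lemma UN_cyl_snoc:
  assumes "w \<noteq> []" and "\<iota> ` I = succs N A (last w)"
  shows "(\<Union>k\<in>I. cyl N A (w @ [\<iota> k])) = cyl N A w"
  unfolding cyl_eq_UN_snoc[OF assms(1)] assms(2)[symmetric] by simp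

definition cyl_step_functions :: "nat \<Rightarrow> (nat \<Rightarrow> nat \<Rightarrow> real) \<Rightarrow> nat list \<Rightarrow> ((nat \<Rightarrow> nat) \<Rightarrow> real) set" where
  "cyl_step_functions N A w = {f. (\<forall>x \<in> Omega N A - cyl N A w. f x = 0) \<and>
     (\<forall>i \<in> succs N A (last w). \<exists>c. \<forall>x \<in> cyl N A (w @ [i]). f x = c)}"

lemma step_fun_in_cyl_step_functions:
  assumes "w \<noteq> []" and "finite I" and \<iota>: "bij_betw \<iota> I (succs N A (last w))"
  shows "step_fun (\<lambda>k. cyl N A (w @ [\<iota> k])) I b \<in> cyl_step_functions N A w"
proof -
  have disj: "disjoint_family_on (\<lambda>k. cyl N A (w @ [\<iota> k])) I"
    using \<iota> by (intro disjoint_family_on_cyl_snoc) (simp add: bij_betw_def)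
  have "\<exists>c. \<forall>x \<in> cyl N A (w @ [i]). step_fun (\<lambda>k. cyl N A (w @ [\<iota> k])) I b x = c"
    if "i \<in> succs N A (last w)" for i
  proof -
    have "i \<in> \<iota> ` I"
      using that bij_betw_imp_surj_on[OF \<iota>] by simp
    then obtain k where "k \<in> I" "i = \<iota> k"
      by blast
    then have "\<forall>x \<in> cyl N A (w @ [i]). step_fun (\<lambda>k. cyl N A (w @ [\<iota> k])) I b x = b k"
      using step_fun_eq_coeff[OF \<open>finite I\<close> disj \<open>k \<in> I\<close>] by simp
    then show ?thesis by blast
  qed
  moreover have "step_fun (\<lambda>k. cyl N A (w @ [\<iota> k])) I b x = 0" if "x \<notin> cyl N A w" for x
    using that UN_cyl_snoc[OF \<open>w \<noteq> []\<close> bij_betw_imp_surj_on[OF \<iota>]] by (intro step_fun_eq_0) simp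
  ultimately show ?thesis
    unfolding cyl_step_functions_def by blast
qed

lemma cyl_step_functions_eq_step_fun:
  assumes "w \<noteq> []" and "finite I" and \<iota>: "bij_betw \<iota> I (succs N A (last w))"
    and f: "f \<in> cyl_step_functions N A w"
  obtains b where "\<forall>x \<in> Omega N A. f x = step_fun (\<lambda>k. cyl N A (w @ [\<iota> k])) I b x"
proof
  let ?C = "\<lambda>k. cyl N A (w @ [\<iota> k])"
  define b where "b k = (SOME c. \<forall>x \<in> ?C k. f x = c)" for k
  have disj: "disjoint_family_on ?C I"
    using \<iota> by (intro disjoint_family_on_cyl_snoc) (simp add: bij_betw_def)
  have f_on_piece: "f x = b k" if "k \<in> I" "x \<in> ?C k" for k x
  proof -
    have "\<exists>c. \<forall>x \<in> ?C k. f x = c"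
      using f bij_betwE[OF \<iota>] that(1) unfolding cyl_step_functions_def by blast
    from someI_ex[OF this] show ?thesis
      unfolding b_def using that(2) by blast
  qed
  show "\<forall>x \<in> Omega N A. f x = step_fun ?C I b x"
  proof
    fix x assume "x \<in> Omega N A"
    show "f x = step_fun ?C I b x"
    proof (cases "x \<in> cyl N A w")
      case True
      then obtain k where "k \<in> I" "x \<in> ?C k"
        using UN_cyl_snoc[OF \<open>w \<noteq> []\<close> bij_betw_imp_surj_on[OF \<iota>]] by blast
      then show ?thesis
        using f_on_piece step_fun_eq_coeff[OF \<open>finite I\<close> disj] by simp
    next
      case False
      then have "f x = 0"
        using f \<open>x \<in> Omega N A\<close> unfolding cyl_step_functions_def by blast
      moreover have "step_fun ?C I b x = 0"
        using False UN_cyl_snoc[OF \<open>w \<noteq> []\<close> bij_betw_imp_surj_on[OF \<iota>]]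
        by (intro step_fun_eq_0) simp
      ultimately show ?thesis by simp
    qed
  qed
qed

lemma Pmat_succs: "i \<in> succs N A l \<Longrightarrow> Pmat A lam u l i = u i / (lam * u l)"
  unfolding Pmat_def succs_def by simp

locale mu_c_space =
  fixes N :: nat and A :: "nat \<Rightarrow> nat \<Rightarrow> real" and lam :: real and u :: "nat \<Rightarrow> real"
    and M :: "(nat \<Rightarrow> nat) measure"
  assumes zero_one: "zero_one_matrix N A"
    and u_pos: "\<forall>i\<in>{1..N}. 0 < u i"
    and eigen: "\<forall>i\<in>{1..N}. (\<Sum>j\<in>{1..N}. A i j * u j) = lam * u i"
    and mu_c: "is_mu_c N A lam u M"
begin

lemma eigen_succs:
  assumes "l \<in> {1..N}"
  shows "lam * u l = (\<Sum>j\<in>succs N A l. u j)"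
proof -
  have "(\<Sum>j\<in>succs N A l. u j) = (\<Sum>j\<in>{1..N}. if A l j = 1 then u j else 0)"
    unfolding succs_def by (rule sum.inter_filter) simp
  also have "\<dots> = (\<Sum>j\<in>{1..N}. A l j * u j)"
  proof (rule sum.cong)
    fix j assume "j \<in> {1..N}"
    then have "A l j = 0 \<or> A l j = 1"
      using zero_one assms unfolding zero_one_matrix_def by blast
    then show "(if A l j = 1 then u j else 0) = A l j * u j" by auto
  qed simp
  finally show ?thesis
    using eigen assms by simp
qed

lemma eigenvalue_pos:
  assumes "l \<in> {1..N}" and "succs N A l \<noteq> {}"
  shows "0 < lam"
proof -
  have "0 < (\<Sum>j\<in>succs N A l. u j)"
    using assms(2) u_pos by (intro sum_pos) (auto simp: succs_def)
  then show ?thesis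
    using eigen_succs[OF assms(1)] u_pos assms(1) by (metis zero_less_mult_pos2)
qed

lemma Pmat_pos:
  assumes "l \<in> {1..N}" and "i \<in> succs N A l"
  shows "0 < Pmat A lam u l i"
proof -
  have "0 < lam" "0 < u l" "0 < u i"
    using assms eigenvalue_pos[OF assms(1)] u_pos by (auto simp: succs_def)
  then show ?thesis
    using assms(2) by (simp add: Pmat_succs)
qed

lemma sum_Pmat_succs:
  assumes "l \<in> {1..N}" and "succs N A l \<noteq> {}"
  shows "(\<Sum>i\<in>succs N A l. Pmat A lam u l i) = 1"
proof -
  have "(\<Sum>i\<in>succs N A l. Pmat A lam u l i) = (\<Sum>i\<in>succs N A l. u i) / (lam * u l)"
    by (simp add: Pmat_succs sum_divide_distrib)
  moreover have "0 < lam * u l"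
    using eigenvalue_pos[OF assms] u_pos assms(1) by simp
  ultimately show ?thesis
    using eigen_succs[OF assms(1)] by simp
qed

lemma cyl_in_sets: "w \<in> admissible_words N A \<Longrightarrow> cyl N A w \<in> sets M"
  using mu_c unfolding is_mu_c_def by auto

lemma emeasure_cyl_finite: "w \<in> admissible_words N A \<Longrightarrow> w \<noteq> [] \<Longrightarrow> emeasure M (cyl N A w) < \<infinity>"
  using mu_c unfolding is_mu_c_def by simp

lemma measure_cyl:
  assumes "w \<in> admissible_words N A" and "w \<noteq> []" and "0 < lam"
  shows "measure M (cyl N A w) = u (last w) / lam ^ (length w - 1)"
  using mu_c assms u_pos last_in_alphabet[OF assms(1,2)] unfolding is_mu_c_def measure_def by simp

lemma measure_cyl_pos:
  assumes "w \<in> admissible_words N A" and "w \<noteq> []" and "0 < lam"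
  shows "0 < measure M (cyl N A w)"
  using measure_cyl[OF assms] u_pos last_in_alphabet[OF assms(1,2)] \<open>0 < lam\<close> by simp

lemma measure_cyl_snoc:
  assumes "w \<in> admissible_words N A" and "w \<noteq> []" and "i \<in> succs N A (last w)"
  shows "measure M (cyl N A (w @ [i])) = measure M (cyl N A w) * Pmat A lam u (last w) i"
proof -
  have "0 < lam"
    using eigenvalue_pos last_in_alphabet[OF assms(1,2)] assms(3) by blast
  moreover have "lam ^ length w = lam ^ (length w - 1) * lam"
    using assms(2) by (cases "length w") auto
  moreover have "0 < u (last w)"
    using u_pos last_in_alphabet[OF assms(1,2)] by blast
  ultimately show ?thesis
    using measure_cyl[OF admissible_snoc[OF assms]] measure_cyl[OF assms(1,2)] assms(3)
    by (simp add: Pmat_succs)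
qed

end

section \<open>Refinement of a cylinder into its one-letter extensions\<close>

locale cylinder_refinement = mu_c_space +
  fixes \<nu> :: "nat list" and \<iota> :: "nat \<Rightarrow> nat" and c :: nat
  assumes admissible: "\<nu> \<in> admissible_words N A" and nonempty: "\<nu> \<noteq> []"
    and enum: "bij_betw \<iota> {1..c} (succs N A (last \<nu>))" and branching: "1 \<le> c"
begin

definition mass :: real where
  "mass = measure M (cyl N A \<nu>)"

definition weight :: "nat \<Rightarrow> real" where
  "weight k = Pmat A lam u (last \<nu>) (\<iota> k)"

definition refine_step :: "(nat \<Rightarrow> real) \<Rightarrow> (nat \<Rightarrow> nat) \<Rightarrow> real" where
  "refine_step = step_fun (\<lambda>k. cyl N A (\<nu> @ [\<iota> k])) {1..c}"

lemma last_letter_in_alphabet: "last \<nu> \<in> {1..N}"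
  using last_in_alphabet[OF admissible nonempty] .

lemma succs_nonempty: "succs N A (last \<nu>) \<noteq> {}"
  using bij_betw_apply[OF enum, of 1] branching by auto

lemma mass_pos: "0 < mass"
  unfolding mass_def
  using measure_cyl_pos[OF admissible nonempty eigenvalue_pos[OF last_letter_in_alphabet succs_nonempty]] .

lemma weight_pos: "\<forall>k\<in>{1..c}. 0 < weight k"
  unfolding weight_def using Pmat_pos[OF last_letter_in_alphabet] bij_betw_apply[OF enum] by blast

lemma cumsum_weight: "cumsum weight c = 1"
  unfolding cumsum_def weight_def sum.reindex_bij_betw[OF enum]
  using sum_Pmat_succs[OF last_letter_in_alphabet succs_nonempty] .

lemma disjoint_refinement: "disjoint_family_on (\<lambda>k. cyl N A (\<nu> @ [\<iota> k])) {1..c}"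
  using disjoint_family_on_cyl_snoc[OF bij_betw_imp_inj_on[OF enum]] .

lemma refine_step_const: "refine_step (\<lambda>_. r) x = r * indicator (cyl N A \<nu>) x"
  unfolding refine_step_def
  using step_fun_const[OF _ disjoint_refinement] UN_cyl_snoc[OF nonempty bij_betw_imp_surj_on[OF enum]]
  by simp

lemma integral_refine_step:
  "(\<integral>x. refine_step b x \<partial>M) = mass * (\<Sum>k=1..c. b k * weight k)"
proof -
  have adm: "\<nu> @ [\<iota> k] \<in> admissible_words N A" if "k \<in> {1..c}" for k
    using admissible_snoc[OF admissible nonempty bij_betw_apply[OF enum that]] .
  have "(\<integral>x. refine_step b x \<partial>M) = (\<Sum>k=1..c. b k * measure M (cyl N A (\<nu> @ [\<iota> k])))"
    unfolding refine_step_def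
    using adm cyl_in_sets emeasure_cyl_finite by (intro integral_step_fun) auto
  also have "\<dots> = (\<Sum>k=1..c. mass * (b k * weight k))"
    unfolding mass_def weight_def
    using measure_cyl_snoc[OF admissible nonempty bij_betw_apply[OF enum]] by (intro sum.cong) auto
  finally show ?thesis
    by (simp add: sum_distrib_left)
qed

lemma integral_refine_step_mult:
  "(\<integral>x. refine_step b x * refine_step b' x \<partial>M) = mass * (\<Sum>k=1..c. b k * b' k * weight k)"
  using integral_refine_step step_fun_mult[OF _ disjoint_refinement] by (simp add: refine_step_def)

lemma refine_step_in_cyl_step_functions: "refine_step b \<in> cyl_step_functions N A \<nu>"
  unfolding refine_step_def using step_fun_in_cyl_step_functions[OF nonempty _ enum] by simp

lemma cyl_step_functions_haar_expansion:
  assumes "f \<in> cyl_step_functions N A \<nu>"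
  obtains d where "\<forall>x \<in> Omega N A. f x = (\<Sum>j=0..c-1. d j * refine_step (haar_basis mass weight j) x)"
proof -
  obtain b where b: "\<forall>x \<in> Omega N A. f x = refine_step b x"
    using cyl_step_functions_eq_step_fun[OF nonempty _ enum assms] unfolding refine_step_def by blast
  obtain d where "\<forall>k\<in>{1..c}. b k = (\<Sum>j=0..c-1. d j * haar_basis mass weight j k)"
    using haar_basis_span[OF mass_pos weight_pos branching] by blast
  then have "refine_step b = refine_step (\<lambda>k. \<Sum>j=0..c-1. d j * haar_basis mass weight j k)"
    unfolding refine_step_def by (intro step_fun_cong) simp
  then have "\<forall>x \<in> Omega N A. f x = (\<Sum>j=0..c-1. d j * refine_step (haar_basis mass weight j) x)"
    using b by (simp add: refine_step_def step_fun_linear)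
  then show ?thesis
    by (rule that)
qed

end

theorem proposition4p1:
  fixes N :: nat and A :: "nat \<Rightarrow> nat \<Rightarrow> real" and lam :: real and u :: "nat \<Rightarrow> real"
    and M :: "(nat \<Rightarrow> nat) measure"
    and \<beta> \<nu> :: "nat list" and \<iota> :: "nat \<Rightarrow> nat"
    and q :: "nat \<Rightarrow> real" and a :: "nat \<Rightarrow> nat \<Rightarrow> real" and h :: "nat \<Rightarrow> (nat \<Rightarrow> nat) \<Rightarrow> real"
    and e :: "nat \<Rightarrow> (nat \<Rightarrow> nat) \<Rightarrow> real" and F :: "((nat \<Rightarrow> nat) \<Rightarrow> real) set"
  assumes A01: "zero_one_matrix N A"
    and prim: "primitive N A"
    and u_pos: "\<forall>i\<in>{1..N}. u i > 0"
    and eigen: "\<forall>i\<in>{1..N}. (\<Sum>j\<in>{1..N}. A i j * u j) = lam * u i"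
    and u_norm: "(\<Sum>i\<in>{1..N}. u i) = 1"
    and mu: "is_mu_c N A lam u M"
    and beta: "\<beta> \<in> admissible_words N A" "\<beta> \<noteq> []"
    and nu: "\<nu> \<in> words_from N A \<beta>"
    and c2: "nsuccs N A (last \<nu>) \<ge> 2"
    and iota: "bij_betw \<iota> {1..nsuccs N A (last \<nu>)} (succs N A (last \<nu>))"
    and q_def: "\<And>m. q m = (\<Sum>k=1..m. Pmat A lam u (last \<nu>) (\<iota> k))"
    and a_def: "\<And>j k. a j k =
        (if 1 \<le> k \<and> k \<le> j then
           sqrt (Pmat A lam u (last \<nu>) (\<iota> (j+1)) / (measure M (cyl N A \<nu>) * q j * q (j+1)))
         else if k = j + 1 then
           - sqrt (q j / (measure M (cyl N A \<nu>) * q (j+1) * Pmat A lam u (last \<nu>) (\<iota> (j+1))))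
         else 0)"
    and h_def: "\<And>j x. h j x = (\<Sum>k=1..nsuccs N A (last \<nu>).
                   a j k * indicator (cyl N A (\<nu> @ [\<iota> k])) x)"
    and e_def: "\<And>k x. e k x = (if k = 0 then
                   indicator (cyl N A \<nu>) x / sqrt (measure M (cyl N A \<nu>)) else h k x)"
    and F_def: "F = {f. (\<forall>x \<in> Omega N A - cyl N A \<nu>. f x = 0) \<and>
                   (\<forall>i \<in> succs N A (last \<nu>). \<exists>c. \<forall>x \<in> cyl N A (\<nu> @ [i]). f x = c)}"
  shows
    "(\<forall>j\<in>{1..nsuccs N A (last \<nu>) - 1}.
        (\<forall>x \<in> Omega N A - cyl N A \<nu>. h j x = 0) \<and>
        (\<forall>i \<in> succs N A (last \<nu>). \<exists>c. \<forall>x \<in> cyl N A (\<nu> @ [i]). h j x = c))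
   \<and> (\<forall>j\<in>{1..nsuccs N A (last \<nu>) - 1}. (\<integral>x. h j x \<partial>M) = 0)
   \<and> (\<forall>j\<in>{1..nsuccs N A (last \<nu>) - 1}. \<forall>j'\<in>{1..nsuccs N A (last \<nu>) - 1}.
        (\<integral>x. h j x * h j' x \<partial>M) = (if j = j' then 1 else 0))
   \<and> ((\<forall>k\<in>{0..nsuccs N A (last \<nu>) - 1}. e k \<in> F)
      \<and> (\<forall>k\<in>{0..nsuccs N A (last \<nu>) - 1}. \<forall>k'\<in>{0..nsuccs N A (last \<nu>) - 1}.
           (\<integral>x. e k x * e k' x \<partial>M) = (if k = k' then 1 else 0))
      \<and> (\<forall>f\<in>F. \<exists>c :: nat \<Rightarrow> real. \<forall>x \<in> Omega N A.
           f x = (\<Sum>k=0..nsuccs N A (last \<nu>) - 1. c k * e k x)))"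
proof -
  interpret cylinder_refinement N A lam u M \<nu> \<iota> "nsuccs N A (last \<nu>)"
    using A01 u_pos eigen mu nu beta c2 iota by unfold_locales (auto simp: words_from_def)
  let ?c = "nsuccs N A (last \<nu>)"
  have h_eq: "h j = refine_step (haar_vector mass weight j)" for j
    unfolding h_def[abs_def] refine_step_def step_fun_def haar_vector_def haar_pos_def haar_neg_def
      cumsum_def a_def q_def weight_def mass_def by simp
  have e_eq: "e k = refine_step (haar_basis mass weight k)" for k
    by (rule ext) (simp add: e_def haar_basis_def h_eq refine_step_const mass_def)
  have F_eq: "F = cyl_step_functions N A \<nu>"
    unfolding F_def cyl_step_functions_def ..
  have h_mean: "(\<integral>x. h j x \<partial>M) = 0" if "j \<in> {1..?c - 1}" for j
    using haar_vector_mean_zero[OF mass_pos weight_pos that] by (simp add: h_eq integral_refine_step)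
  have h_inner: "(\<integral>x. h j x * h j' x \<partial>M) = (if j = j' then 1 else 0)"
    if "j \<in> {1..?c - 1}" "j' \<in> {1..?c - 1}" for j j'
    using haar_vector_orthonormal[OF mass_pos weight_pos that]
    by (simp add: h_eq integral_refine_step_mult)
  have e_inner: "(\<integral>x. e k x * e k' x \<partial>M) = (if k = k' then 1 else 0)"
    if "k \<in> {0..?c - 1}" "k' \<in> {0..?c - 1}" for k k'
    using haar_basis_orthonormal[OF mass_pos weight_pos cumsum_weight that]
    by (simp add: e_eq integral_refine_step_mult)
  have e_span: "\<exists>d. \<forall>x \<in> Omega N A. f x = (\<Sum>k=0..?c - 1. d k * e k x)"
    if "f \<in> F" for f
    using cyl_step_functions_haar_expansion that unfolding F_eq e_eq by metis
  show ?thesis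
    using refine_step_in_cyl_step_functions h_mean h_inner e_inner e_span
    unfolding h_eq e_eq F_eq cyl_step_functions_def by auto
qed

end
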